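(* Let $\mathcal{A}$ be a finite list of elements of a finitely generated abelian group $\Gamma$, let $G$ be a torsion-wise finite abelian group, and suppose $\mathcal{A}\subset\Gamma_{\mathrm{tor}}$. Then $$T^G_{\mathcal{A}}(x,y)=\sum_{k=0}^{\#\mathcal{A}}\Bigg(\sum_{\substack{\mathcal{S}\subset\mathcal{A}\\ \#\mathcal{S}=k}}\#\mathcal{M}(\mathcal{A}/\mathcal{S};\Gamma_{\mathrm{tor}}/\langle\mathcal{S}\rangle,G)\Bigg)y^k.$$ In particular $T^G_{\mathcal{A}}(x,y)$ is a polynomial in $y$ alone whose coefficients are non-negative integers.
   Context: $G$ is torsion-wise finite if $G[d]=\{x\in G\mid dx=0\}$ is finite for all $d>0$. Sublists are distinguished by index. $r_{\mathcal{S}}$ is the rank of $\langle\mathcal{S}\rangle$, $m(\mathcal{S};G)=\#\mathrm{Hom}((\Gamma/\langle\mathcal{S}\rangle)_{\mathrm{tor}},G)$, $T^G_{\mathcal{A}}(x,y)=\sum_{\mathcal{S}\subset\mathcal{A}}m(\mathcal{S};G)(x-1)^{r_{\mathcal{A}}-r_{\mathcal{S}}}(y-1)^{\#\mathcal{S}-r_{\mathcal{S}}}$. For a list $\mathcal{B}$ in an abelian group $\Lambda$, $\mathcal{M}(\mathcal{B};\Lambda,G)=\mathrm{Hom}(\Lambda,G)\smallsetminus\bigcup_{\beta\in\mathcal{B}}\{\varphi\mid\varphi(\beta)=0\}$; the contraction $\mathcal{A}/\mathcal{S}$ is the list of cosets $\{\overline\alpha\mid\alpha\in\mathcal{A}\smallsetminus\mathcal{S}\}$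 in $\Gamma_{\mathrm{tor}}/\langle\mathcal{S}\rangle$. *)

theory Defs
  imports "HOL-Algebra.Algebra"
begin

(* Abelian groups are HOL-Algebra groups (written multiplicatively). *)

definition tor :: "('a,'b) monoid_scheme \<Rightarrow> 'a set" where
  "tor G = {x \<in> carrier G. \<exists>n::nat. n > 0 \<and> x [^]\<^bsub>G\<^esub> n = \<one>\<^bsub>G\<^esub>}"

definition tor_group :: "('a,'b) monoid_scheme \<Rightarrow> ('a,'b) monoid_scheme" where
  "tor_group G = G\<lparr>carrier := tor G\<rparr>"

definition torsion_wise_finite :: "('a,'b) monoid_scheme \<Rightarrow> bool" where
  "torsion_wise_finite G \<longleftrightarrow>
     (\<forall>d::nat. d > 0 \<longrightarrow> finite {x \<in> carrier G. x [^]\<^bsub>G\<^esub> d = \<one>\<^bsub>G\<^esub>})"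

definition finitely_generated :: "('a,'b) monoid_scheme \<Rightarrow> bool" where
  "finitely_generated G \<longleftrightarrow>
     (\<exists>Y. finite Y \<and> Y \<subseteq> carrier G \<and> generate G Y = carrier G)"

definition Z_lin_indep :: "('a,'b) monoid_scheme \<Rightarrow> 'a set \<Rightarrow> bool" where
  "Z_lin_indep G Y \<longleftrightarrow> finite Y \<and> Y \<subseteq> carrier G \<and>
     (\<forall>c :: 'a \<Rightarrow> int. finprod G (\<lambda>x. x [^]\<^bsub>G\<^esub> c x) Y = \<one>\<^bsub>G\<^esub>
         \<longrightarrow> (\<forall>x\<in>Y. c x = 0))"

definition rank_of :: "('a,'b) monoid_scheme \<Rightarrow> 'a set \<Rightarrow> nat" where
  "rank_of G H = Sup {card Y | Y. Y \<subseteq> H \<and> Z_lin_indep G Y}"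

(* the set Hom(A,B) of homomorphisms, made extensional so it can be counted *)
definition Homs :: "('a,'b) monoid_scheme \<Rightarrow> ('c,'d) monoid_scheme \<Rightarrow> ('a \<Rightarrow> 'c) set" where
  "Homs A B = {f. f \<in> hom A B \<and> f \<in> extensional (carrier A)}"

(* a sublist of the list As is given by a set of indices *)
definition span_idx :: "('a,'b) monoid_scheme \<Rightarrow> 'a list \<Rightarrow> nat set \<Rightarrow> 'a set" where
  "span_idx \<Gamma> As S = generate \<Gamma> ((\<lambda>i. As ! i) ` S)"

definition m_mult :: "('a,'b) monoid_scheme \<Rightarrow> 'a list \<Rightarrow> nat set \<Rightarrow> ('c,'d) monoid_scheme \<Rightarrow> nat" where
  "m_mult \<Gamma> As S G = card (Homs (tor_group (\<Gamma> Mod span_idx \<Gamma> As S)) G)"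

(* arithmetic Tutte polynomial T^G_A(x,y), evaluated in an arbitrary commutative ring *)
definition tutteG :: "('a,'b) monoid_scheme \<Rightarrow> 'a list \<Rightarrow> ('c,'d) monoid_scheme
    \<Rightarrow> 'r::comm_ring_1 \<Rightarrow> 'r \<Rightarrow> 'r" where
  "tutteG \<Gamma> As G x y =
     (\<Sum>S\<in>Pow {0..<length As}.
        of_nat (m_mult \<Gamma> As S G)
        * (x - 1) ^ (rank_of \<Gamma> (span_idx \<Gamma> As {0..<length As}) - rank_of \<Gamma> (span_idx \<Gamma> As S))
        * (y - 1) ^ (card S - rank_of \<Gamma> (span_idx \<Gamma> As S)))"

(* M(B;\<Lambda>,G) for B the list of cosets of the elements of As \ S in \<Lambda> = \<Gamma>_tor/<S> *)
definition M_contr :: "('a,'b) monoid_scheme \<Rightarrow> 'a list \<Rightarrow> nat set \<Rightarrow> ('c,'d) monoid_scheme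
    \<Rightarrow> ('a set \<Rightarrow> 'c) set" where
  "M_contr \<Gamma> As S G =
     {\<phi> \<in> Homs (tor_group \<Gamma> Mod span_idx \<Gamma> As S) G.
        \<forall>i\<in>{0..<length As} - S. \<phi> (span_idx \<Gamma> As S #>\<^bsub>\<Gamma>\<^esub> (As ! i)) \<noteq> \<one>\<^bsub>G\<^esub>}"

end

theory Submission
  imports Defs
begin

text \<open>
  All list elements are torsion, so every \<open>\<langle>S\<rangle>\<close> has rank 0 and
  \<open>(\<Gamma>/\<langle>S\<rangle>)_tor = \<Gamma>_tor/\<langle>S\<rangle>\<close>; the Tutte polynomial collapses to
  \<open>\<Sum>_S m(S) (y - 1)^#S\<close>. A homomorphism \<open>\<Gamma>_tor/\<langle>S\<rangle> \<rightarrow> G\<close> is a homomorphism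
  \<open>\<psi> : \<Gamma>_tor \<rightarrow> G\<close> vanishing on \<open>S\<close>, and it is counted in \<open>M(A/S)\<close> exactly when the
  set \<open>Z(\<psi>)\<close> of indices of list elements killed by \<open>\<psi>\<close> equals \<open>S\<close>. Hence both sides
  equal \<open>\<Sum>_\<psi> y^#Z(\<psi>)\<close>, a finite sum since \<open>\<Gamma>_tor\<close> is finite and the \<open>d\<close>-torsion of
  \<open>G\<close> is finite: on the left via \<open>\<Sum>_(S \<subseteq> Z) (y - 1)^#S = y^#Z\<close>, on the right by
  grouping the \<open>\<psi>\<close> according to \<open>Z(\<psi>)\<close>.
\<close>

context comm_group
begin

lemma tor_subgroup: "subgroup (tor G) G"
proof (rule subgroupI)
  show "tor G \<subseteq> carrier G" "tor G \<noteq> {}"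
    unfolding tor_def by (auto intro!: exI[of _ "1::nat"])
next
  fix a assume "a \<in> tor G"
  then obtain n :: nat where "a \<in> carrier G" "n > 0" "a [^] n = \<one>" unfolding tor_def by blast
  then show "inv a \<in> tor G" unfolding tor_def by (auto simp: nat_pow_inv intro!: exI[of _ n])
next
  fix a b assume "a \<in> tor G" "b \<in> tor G"
  then obtain n k :: nat where a: "a \<in> carrier G" "n > 0" "a [^] n = \<one>"
    and b: "b \<in> carrier G" "k > 0" "b [^] k = \<one>"
    unfolding tor_def by blast
  have "(a \<otimes> b) [^] (n * k) = a [^] (n * k) \<otimes> b [^] (k * n)"
    using a b by (simp add: nat_pow_distrib mult.commute)
  also have "\<dots> = \<one>"
    using a b by (simp add: nat_pow_pow[symmetric])
  finally show "a \<otimes> b \<in> tor G" using a b unfolding tor_def by (auto intro!: exI[of _ "n * k"])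
qed

lemma tor_subset_carrier: "tor G \<subseteq> carrier G"
  using subgroup.subset[OF tor_subgroup] .

lemma generate_insert_subset_cosets:
  assumes "y \<in> carrier G" "Y \<subseteq> carrier G"
  shows "generate G (insert y Y) \<subseteq> (\<Union>k::int. generate G Y #> y [^] k)"
proof
  fix t assume "t \<in> generate G (insert y Y)"
  then show "t \<in> (\<Union>k::int. generate G Y #> y [^] k)"
  proof (induction t rule: generate.induct)
    have gen: "subgroup (generate G Y) G" by (rule generate_is_subgroup[OF assms(2)])
    have pow_coset: "y [^] k \<in> generate G Y #> y [^] k" for k :: int
      by (rule rcos_self[OF _ gen]) (simp add: assms(1))
    have gen_coset: "g \<in> (\<Union>k::int. generate G Y #> y [^] k)" if "g \<in> generate G Y" for g
      using that gen by (auto intro: exI[of _ 0] simp: subgroup.subset)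
    { case one show ?case by (rule gen_coset, rule generate.one) }
    { case (incl h)
      then consider "h = y" | "h \<in> Y" by blast
      then show ?case
      proof cases
        case 1 then show ?thesis using pow_coset[of 1] assms(1) by (auto intro: exI[of _ 1])
      qed (rule gen_coset, rule generate.incl) }
    { case (inv h)
      then consider "h = y" | "h \<in> Y" by blast
      then show ?case
      proof cases
        case 1 then show ?thesis using pow_coset[of "-1"] assms(1) by (auto simp: int_pow_neg intro: exI[of _ "-1"])
      qed (rule gen_coset, rule generate.inv) }
    { case (eng h1 h2)
      then obtain a b :: int where "h1 \<in> generate G Y #> y [^] a" "h2 \<in> generate G Y #> y [^] b" by blast
      then obtain g1 g2 where g: "g1 \<in> generate G Y" "g2 \<in> generate G Y"
        and h: "h1 = g1 \<otimes> y [^] a" "h2 = g2 \<otimes> y [^] b" unfolding r_coset_def by blast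
      have "g1 \<in> carrier G" "g2 \<in> carrier G" using g subgroup.mem_carrier[OF gen] by auto
      then have "h1 \<otimes> h2 = (g1 \<otimes> g2) \<otimes> y [^] (a + b)"
        using h assms(1) by (simp add: int_pow_mult m_ac)
      moreover have "g1 \<otimes> g2 \<in> generate G Y" using g gen by (simp add: subgroup.m_closed)
      ultimately show ?case unfolding r_coset_def by blast }
  qed
qed

lemma finite_tor_inter_coset:
  assumes K: "subgroup K G" and fin: "finite (tor G \<inter> K)" and c: "c \<in> carrier G"
  shows "finite (tor G \<inter> (K #> c))"
proof (cases "tor G \<inter> (K #> c) = {}")
  case False
  then obtain t0 where t0: "t0 \<in> tor G" "t0 \<in> K #> c" by blast
  have t0c: "t0 \<in> carrier G" using t0 tor_subset_carrier by blast
  have "tor G \<inter> (K #> c) \<subseteq> (\<lambda>u. u \<otimes> t0) ` (tor G \<inter> K)"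
  proof
    fix t assume t: "t \<in> tor G \<inter> (K #> c)"
    have tc: "t \<in> carrier G" using t tor_subset_carrier by blast
    have "K #> t = K #> t0"
      using t t0 c K by (metis IntD2 repr_independence)
    then have "t \<otimes> inv t0 \<in> K"
      using K tc t0c by (metis is_group rcos_self subgroup.rcos_module_imp)
    moreover have "t \<otimes> inv t0 \<in> tor G"
      using t t0 tor_subgroup by (simp add: subgroup.m_closed subgroup.m_inv_closed)
    moreover have "t = t \<otimes> inv t0 \<otimes> t0" using tc t0c by (simp add: m_assoc)
    ultimately show "t \<in> (\<lambda>u. u \<otimes> t0) ` (tor G \<inter> K)" by blast
  qed
  then show ?thesis by (rule finite_surj[OF fin])
qed simp

lemma r_coset_int_pow_mod:
  assumes K: "subgroup K G" and y: "y \<in> carrier G" and m: "y [^] m \<in> K"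
  shows "K #> y [^] (k::int) = K #> y [^] (k mod m)"
proof -
  have "y [^] k = y [^] (m * (k div m) + k mod m)" by simp
  also have "\<dots> = (y [^] m) [^] (k div m) \<otimes> y [^] (k mod m)"
    using y by (simp add: int_pow_pow flip: int_pow_mult)
  finally have "K #> y [^] k = (K #> (y [^] m) [^] (k div m)) #> y [^] (k mod m)"
    using y subgroup.subset[OF K] by (simp add: coset_mult_assoc)
  also have "K #> (y [^] m) [^] (k div m) = K"
    using y m by (simp add: coset_join2[OF _ K] subgroup_int_pow_closed[OF K])
  finally show ?thesis .
qed

lemma finite_tor_inter_cosets_of_periodic:
  assumes K: "subgroup K G" and finK: "finite (tor G \<inter> K)"
    and y: "y \<in> carrier G" and m: "m > 0" "y [^] (m::int) \<in> K"
  shows "finite (tor G \<inter> (\<Union>k::int. K #> y [^] k))"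
proof -
  have "tor G \<inter> (\<Union>k::int. K #> y [^] k) \<subseteq> (\<Union>j\<in>{0..<m}. tor G \<inter> (K #> y [^] j))"
  proof
    fix t assume "t \<in> tor G \<inter> (\<Union>k::int. K #> y [^] k)"
    then obtain k :: int where "t \<in> tor G" "t \<in> K #> y [^] (k mod m)"
      using r_coset_int_pow_mod[OF K y m(2)] by auto
    moreover have "k mod m \<in> {0..<m}" using m(1) by simp
    ultimately show "t \<in> (\<Union>j\<in>{0..<m}. tor G \<inter> (K #> y [^] j))" by blast
  qed
  moreover have "finite (\<Union>j\<in>{0..<m}. tor G \<inter> (K #> y [^] j))"
    using y by (intro finite_UN_I finite_tor_inter_coset[OF K finK]) auto
  ultimately show ?thesis by (rule finite_subset)
qed

lemma tor_inter_cosets_of_aperiodic: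
  assumes K: "subgroup K G" and y: "y \<in> carrier G"
    and aperiodic: "\<And>k::int. y [^] k \<in> K \<Longrightarrow> k = 0"
  shows "tor G \<inter> (\<Union>k::int. K #> y [^] k) \<subseteq> K"
proof
  fix t assume t: "t \<in> tor G \<inter> (\<Union>k::int. K #> y [^] k)"
  then obtain k :: int and g where g: "g \<in> K" "t = g \<otimes> y [^] k"
    unfolding r_coset_def by blast
  have gc: "g \<in> carrier G" using subgroup.mem_carrier[OF K g(1)] .
  obtain n :: nat where n: "n > 0" "t [^] n = \<one>" using t unfolding tor_def by blast
  have "(y [^] k) [^] n = y [^] (k * int n)"
    using int_pow_pow[OF y, of k "int n"] by (simp add: int_pow_int)
  then have "g [^] n \<otimes> y [^] (k * int n) = \<one>"
    using n g gc y by (simp add: nat_pow_distrib)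
  then have "inv (y [^] (k * int n)) = g [^] n"
    using gc y by (intro inv_equality) auto
  then have "y [^] (k * int n) = inv (g [^] n)"
    using y by (metis inv_inv int_pow_closed)
  then have "y [^] (k * int n) \<in> K"
    using subgroup_int_pow_closed[OF K g(1), of "int n"]
    by (simp add: subgroup.m_inv_closed[OF K] int_pow_int)
  then have "k * int n = 0" by (rule aperiodic)
  then have "k = 0" using n(1) by simp
  then show "t \<in> K" using g gc by simp
qed

lemma finite_tor_inter_generate:
  assumes "finite Y" "Y \<subseteq> carrier G"
  shows "finite (tor G \<inter> generate G Y)"
  using assms
proof (induction Y rule: finite_induct)
  case empty
  then show ?case by (simp add: generate_empty)
next
  case (insert y Y)
  define K where "K = generate G Y"
  have y: "y \<in> carrier G" and Y: "Y \<subseteq> carrier G" using insert.prems by auto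
  have K: "subgroup K G" unfolding K_def by (rule generate_is_subgroup[OF Y])
  have finK: "finite (tor G \<inter> K)" using insert.IH Y unfolding K_def by blast
  have "finite (tor G \<inter> (\<Union>k::int. K #> y [^] k))"
  proof (cases "\<exists>m::int. m > 0 \<and> y [^] m \<in> K")
    case True
    then show ?thesis using finite_tor_inter_cosets_of_periodic[OF K finK y] by blast
  next
    case False
    have "k = 0" if "y [^] k \<in> K" for k :: int
    proof (rule ccontr)
      assume "k \<noteq> 0"
      moreover have "y [^] (- k) \<in> K"
        using that y by (simp add: int_pow_neg subgroup.m_inv_closed[OF K])
      ultimately show False using False that by (cases "k > 0") auto
    qed
    then have "tor G \<inter> (\<Union>k::int. K #> y [^] k) \<subseteq> tor G \<inter> K"
      using tor_inter_cosets_of_aperiodic[OF K y] by blast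
    then show ?thesis using finK by (rule finite_subset)
  qed
  moreover have "tor G \<inter> generate G (insert y Y) \<subseteq> tor G \<inter> (\<Union>k::int. K #> y [^] k)"
    using generate_insert_subset_cosets[OF y Y] unfolding K_def by blast
  ultimately show ?case by (rule finite_subset[rotated])
qed

lemma finite_tor:
  assumes "finitely_generated G"
  shows "finite (tor G)"
proof -
  obtain Y where "finite Y" "Y \<subseteq> carrier G" "generate G Y = carrier G"
    using assms unfolding finitely_generated_def by blast
  then have "finite (tor G \<inter> carrier G)" using finite_tor_inter_generate by metis
  then show ?thesis using tor_subset_carrier by (simp add: inf.absorb1)
qed

lemma rank_of_subset_tor:
  assumes "H \<subseteq> tor G"
  shows "rank_of G H = 0"
proof -
  have "card Y = 0" if Y: "Y \<subseteq> H" "Z_lin_indep G Y" for Y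
  proof (rule ccontr)
    assume "card Y \<noteq> 0"
    then obtain x where x: "x \<in> Y" by fastforce
    then obtain n :: nat where n: "n > 0" "x [^] n = \<one>"
      using Y(1) assms unfolding tor_def by blast
    have fin: "finite Y" and YC: "Y \<subseteq> carrier G" using Y(2) unfolding Z_lin_indep_def by auto
    define c where "c z = (if z = x then int n else 0)" for z
    have "finprod G (\<lambda>z. z [^] c z) Y = finprod G (\<lambda>z. if x = z then z [^] n else \<one>) Y"
      using YC by (intro finprod_cong') (auto simp: c_def int_pow_int)
    also have "\<dots> = \<one>"
      using finprod_singleton[OF x fin, of "\<lambda>z. z [^] n"] YC n by (simp add: subset_iff)
    finally have "c x = 0" using Y(2) x unfolding Z_lin_indep_def by blast
    then show False using n by (simp add: c_def)
  qed
  moreover have "Z_lin_indep G {}" by (simp add: Z_lin_indep_def)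
  ultimately have "{card Y | Y. Y \<subseteq> H \<and> Z_lin_indep G Y} = {0}"
    by (auto intro!: exI[of _ "{}"] simp del: card_0_eq)
  then show ?thesis unfolding rank_of_def by simp
qed

lemma carrier_tor_group [simp]: "carrier (tor_group G) = tor G"
  by (simp add: tor_group_def)

lemma r_coset_tor_group [simp]: "r_coset (tor_group G) = r_coset G"
  by (simp add: r_coset_def[abs_def] tor_group_def)

lemma mult_tor_group [simp]: "monoid.mult (tor_group G) = monoid.mult G"
  by (simp add: tor_group_def)

lemma set_mult_tor_group: "set_mult (tor_group G) = set_mult G"
  by (simp add: set_mult_def[abs_def] tor_group_def)

lemma comm_group_tor_group: "comm_group (tor_group G)"
proof -
  have "group (tor_group G)" unfolding tor_group_def
    by (rule subgroup.subgroup_is_group[OF tor_subgroup is_group])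
  then show ?thesis
    by (rule group.group_comm_groupI) (auto simp: m_comm tor_def)
qed

lemma r_coset_mem_tor_FactGroup_iff:
  assumes H: "subgroup H G" "H \<subseteq> tor G" and x: "x \<in> carrier G"
  shows "H #> x \<in> tor (G Mod H) \<longleftrightarrow> x \<in> tor G"
proof -
  interpret N: normal H G using H(1) by (rule subgroup_imp_normal)
  have coset_eq_one: "H #> z = H \<longleftrightarrow> z \<in> H" if "z \<in> carrier G" for z
    using coset_join1[OF _ that H(1)] coset_join2[OF that H(1)] by blast
  have "H #> x \<in> tor (G Mod H) \<longleftrightarrow> (\<exists>n::nat. n > 0 \<and> x [^] n \<in> H)"
    using x by (auto simp: tor_def carrier_FactGroup N.FactGroup_pow coset_eq_one)
  also have "\<dots> \<longleftrightarrow> x \<in> tor G"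
  proof
    assume "\<exists>n::nat. n > 0 \<and> x [^] n \<in> H"
    then obtain n k :: nat where "n > 0" "k > 0" "(x [^] n) [^] k = \<one>"
      using H(2) unfolding tor_def by blast
    then show "x \<in> tor G"
      using x unfolding tor_def by (auto simp: nat_pow_pow intro!: exI[of _ "n * k"])
  next
    assume "x \<in> tor G"
    then show "\<exists>n::nat. n > 0 \<and> x [^] n \<in> H"
      unfolding tor_def using subgroup.one_closed[OF H(1)] by auto
  qed
  finally show ?thesis .
qed

lemma tor_group_FactGroup:
  assumes H: "subgroup H G" "H \<subseteq> tor G"
  shows "tor_group (G Mod H) = tor_group G Mod H"
proof -
  have "tor (G Mod H) = r_coset G H ` tor G"
    using r_coset_mem_tor_FactGroup_iff[OF H] tor_subset_carrier
    by (auto simp: carrier_FactGroup tor_def[of "G Mod H"])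
  also have "\<dots> = carrier (tor_group G Mod H)"
    by (simp add: carrier_FactGroup)
  finally have tor_Mod: "tor (G Mod H) = carrier (tor_group G Mod H)" .
  show ?thesis
    unfolding tor_group_def[of "G Mod H"] tor_Mod by (simp add: FactGroup_def set_mult_tor_group)
qed

end

context group
begin

lemma finite_Homs:
  assumes fin: "finite (carrier G)" and K: "group K" and tw: "torsion_wise_finite K"
  shows "finite (Homs G K)"
proof -
  have "Homs G K \<subseteq> PiE (carrier G) (\<lambda>_. {g \<in> carrier K. g [^]\<^bsub>K\<^esub> order G = \<one>\<^bsub>K\<^esub>})"
  proof
    fix \<psi> assume "\<psi> \<in> Homs G K"
    then have h: "\<psi> \<in> hom G K" and e: "\<psi> \<in> extensional (carrier G)" unfolding Homs_def by auto
    have "\<psi> x [^]\<^bsub>K\<^esub> order G = \<one>\<^bsub>K\<^esub>" if x: "x \<in> carrier G" for x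
    proof -
      have "\<psi> x [^]\<^bsub>K\<^esub> order G = \<psi> (x [^] order G)"
        using hom_nat_pow[OF h x is_group K] by simp
      also have "\<dots> = \<one>\<^bsub>K\<^esub>"
        using fin x hom_one[OF h is_group K] by (simp add: pow_order_eq_1)
      finally show ?thesis .
    qed
    then show "\<psi> \<in> PiE (carrier G) (\<lambda>_. {g \<in> carrier K. g [^]\<^bsub>K\<^esub> order G = \<one>\<^bsub>K\<^esub>})"
      using e hom_in_carrier[OF h] by (auto simp: PiE_def)
  qed
  moreover have "order G > 0" using fin by (simp add: order_gt_0_iff_finite)
  then have "finite (PiE (carrier G) (\<lambda>_. {g \<in> carrier K. g [^]\<^bsub>K\<^esub> order G = \<one>\<^bsub>K\<^esub>}))"
    using fin tw by (intro finite_PiE) (auto simp: torsion_wise_finite_def)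
  ultimately show ?thesis by (rule finite_subset)
qed

lemma generate_subset_kernel_iff:
  assumes K: "group K" and h: "\<psi> \<in> hom G K" and W: "W \<subseteq> carrier G"
  shows "generate G W \<subseteq> kernel G K \<psi> \<longleftrightarrow> W \<subseteq> kernel G K \<psi>"
proof
  assume "generate G W \<subseteq> kernel G K \<psi>"
  then show "W \<subseteq> kernel G K \<psi>" using generate.incl[of _ W G] by blast
next
  assume "W \<subseteq> kernel G K \<psi>"
  moreover have "subgroup (kernel G K \<psi>) G"
    using K h by (intro group_hom.subgroup_kernel group_hom.intro group_hom_axioms.intro is_group)
  ultimately show "generate G W \<subseteq> kernel G K \<psi>" by (rule generate_subgroup_incl)
qed

lemma Homs_FactGroup_lift:
  assumes N: "N \<lhd> G" and K: "group K"
    and \<psi>: "\<psi> \<in> Homs G K" and ker: "N \<subseteq> kernel G K \<psi>"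
  obtains \<phi> where "\<phi> \<in> Homs (G Mod N) K" "compose (carrier G) \<phi> (r_coset G N) = \<psi>"
proof -
  have h: "\<psi> \<in> hom G K" and ext: "\<psi> \<in> extensional (carrier G)" using \<psi> by (auto simp: Homs_def)
  interpret \<psi>: group_hom G K \<psi> using h K by (intro group_hom.intro group_hom_axioms.intro is_group)
  obtain g where g: "g \<in> hom (G Mod N) K" "\<And>x. x \<in> carrier G \<Longrightarrow> g (N #> x) = \<psi> x"
    using \<psi>.FactGroup_universal_kernel[OF N ker] by blast
  define \<phi> where "\<phi> = restrict g (carrier (G Mod N))"
  have "\<phi> \<in> hom (G Mod N) K"
    using g(1) group.restrict_hom_iff[OF normal.factorgroup_is_group[OF N], of g "\<lambda>_. undefined" K]
    by (simp add: \<phi>_def restrict_def)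
  then have "\<phi> \<in> Homs (G Mod N) K" by (simp add: \<phi>_def Homs_def)
  moreover have "compose (carrier G) \<phi> (r_coset G N) = \<psi>"
    using ext g(2) by (intro extensionalityI[of _ "carrier G"]) (auto simp: \<phi>_def compose_eq carrier_FactGroup)
  ultimately show ?thesis by (rule that)
qed

lemma Homs_FactGroup_bij:
  assumes N: "N \<lhd> G" and K: "group K"
  shows "bij_betw (\<lambda>\<phi>. compose (carrier G) \<phi> (r_coset G N))
           (Homs (G Mod N) K) {\<psi> \<in> Homs G K. N \<subseteq> kernel G K \<psi>}"
proof -
  interpret N: normal N G by (rule N)
  have \<pi>: "r_coset G N \<in> hom G (G Mod N)" using N.r_coset_hom_Mod .
  have Q: "group (G Mod N)" by (rule N.factorgroup_is_group)
  have "compose (carrier G) \<phi> (r_coset G N) \<in> {\<psi> \<in> Homs G K. N \<subseteq> kernel G K \<psi>}"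
    if "\<phi> \<in> Homs (G Mod N) K" for \<phi>
  proof -
    have h: "\<phi> \<in> hom (G Mod N) K" using that by (simp add: Homs_def)
    have "compose (carrier G) \<phi> (r_coset G N) h = \<one>\<^bsub>K\<^esub>" if "h \<in> N" for h
      using that N.subset coset_join2[OF _ N.subgroup_axioms] hom_one[OF h Q K]
      by (auto simp: compose_eq)
    then show ?thesis
      using hom_compose[OF \<pi> h] N.subset by (auto simp: Homs_def kernel_def compose_eq)
  qed
  moreover have "inj_on (\<lambda>\<phi>. compose (carrier G) \<phi> (r_coset G N)) (Homs (G Mod N) K)"
  proof (rule inj_onI)
    fix \<phi>1 \<phi>2 assume \<phi>: "\<phi>1 \<in> Homs (G Mod N) K" "\<phi>2 \<in> Homs (G Mod N) K"
      and eq: "compose (carrier G) \<phi>1 (r_coset G N) = compose (carrier G) \<phi>2 (r_coset G N)"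
    show "\<phi>1 = \<phi>2"
    proof (rule extensionalityI[of _ "carrier (G Mod N)"])
      show "\<phi>1 \<in> extensional (carrier (G Mod N))" "\<phi>2 \<in> extensional (carrier (G Mod N))"
        using \<phi> by (auto simp: Homs_def)
    next
      fix c assume "c \<in> carrier (G Mod N)"
      then obtain x where "x \<in> carrier G" "c = N #> x" by (auto simp: carrier_FactGroup)
      then show "\<phi>1 c = \<phi>2 c" using fun_cong[OF eq, of x] by (simp add: compose_eq)
    qed
  qed
  moreover have "\<psi> \<in> (\<lambda>\<phi>. compose (carrier G) \<phi> (r_coset G N)) ` Homs (G Mod N) K"
    if "\<psi> \<in> Homs G K" "N \<subseteq> kernel G K \<psi>" for \<psi>
    using Homs_FactGroup_lift[OF N K that] by blast
  ultimately show ?thesis by (auto simp: bij_betw_def)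
qed

end

lemma sum_power_card_Pow:
  fixes a :: "'r::comm_semiring_1"
  assumes "finite T"
  shows "(\<Sum>S\<in>Pow T. a ^ card S) = (a + 1) ^ card T"
  using prod_add[OF assms, of "\<lambda>_. a" "\<lambda>_. 1"] by simp

lemma sum_card_supersets:
  fixes a :: "'r::comm_semiring_1" and Z :: "'p \<Rightarrow> 'i set"
  assumes P: "finite P" and I: "finite I" and Z: "\<And>p. p \<in> P \<Longrightarrow> Z p \<subseteq> I"
  shows "(\<Sum>S\<in>Pow I. of_nat (card {p\<in>P. S \<subseteq> Z p}) * a ^ card S) = (\<Sum>p\<in>P. (a + 1) ^ card (Z p))"
proof -
  have "(\<Sum>S\<in>Pow I. of_nat (card {p\<in>P. S \<subseteq> Z p}) * a ^ card S)
      = (\<Sum>S\<in>Pow I. \<Sum>p\<in>P. if S \<subseteq> Z p then a ^ card S else 0)"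
    using P by (simp add: sum.inter_filter flip: sum_constant)
  also have "\<dots> = (\<Sum>p\<in>P. \<Sum>S\<in>Pow I. if S \<subseteq> Z p then a ^ card S else 0)"
    by (rule sum.swap)
  also have "\<dots> = (\<Sum>p\<in>P. \<Sum>S\<in>Pow (Z p). a ^ card S)"
  proof (rule sum.cong[OF refl])
    fix p assume "p \<in> P"
    then have "{S \<in> Pow I. S \<subseteq> Z p} = Pow (Z p)" using Z by auto
    then show "(\<Sum>S\<in>Pow I. if S \<subseteq> Z p then a ^ card S else 0) = (\<Sum>S\<in>Pow (Z p). a ^ card S)"
      using I by (simp flip: sum.inter_filter)
  qed
  also have "\<dots> = (\<Sum>p\<in>P. (a + 1) ^ card (Z p))"
    using Z I by (intro sum.cong[OF refl] sum_power_card_Pow) (auto intro: finite_subset)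
  finally show ?thesis .
qed

lemma sum_card_fibres_by_size:
  fixes y :: "'r::comm_semiring_1" and Z :: "'p \<Rightarrow> 'i set"
  assumes P: "finite P" and I: "finite I" and Z: "\<And>p. p \<in> P \<Longrightarrow> Z p \<subseteq> I" and n: "card I \<le> n"
  shows "(\<Sum>k = 0..n. of_nat (\<Sum>S\<in>{S. S \<subseteq> I \<and> card S = k}. card {p\<in>P. Z p = S}) * y ^ k)
       = (\<Sum>p\<in>P. y ^ card (Z p))"
proof -
  have "(\<Sum>k = 0..n. of_nat (\<Sum>S\<in>{S. S \<subseteq> I \<and> card S = k}. card {p\<in>P. Z p = S}) * y ^ k)
      = (\<Sum>k = 0..n. \<Sum>S\<in>{S \<in> Pow I. card S = k}. of_nat (card {p\<in>P. Z p = S}) * y ^ card S)"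
    by (simp add: of_nat_sum sum_distrib_right)
  also have "\<dots> = (\<Sum>S\<in>Pow I. of_nat (card {p\<in>P. Z p = S}) * y ^ card S)"
    using I n by (intro sum.group) (auto intro: order_trans[OF card_mono[OF I]])
  also have "\<dots> = (\<Sum>S\<in>Pow I. \<Sum>p\<in>{p\<in>P. Z p = S}. y ^ card (Z p))"
    by simp
  also have "\<dots> = (\<Sum>p\<in>P. y ^ card (Z p))"
    using P I Z by (intro sum.group) auto
  finally show ?thesis .
qed

definition vanishing_indices :: "('c, 'd) monoid_scheme \<Rightarrow> 'a list \<Rightarrow> ('a \<Rightarrow> 'c) \<Rightarrow> nat set" where
  "vanishing_indices K As \<psi> = {i \<in> {0..<length As}. \<psi> (As ! i) = \<one>\<^bsub>K\<^esub>}"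

context comm_group
begin

lemma span_idx_subgroup_tor:
  assumes "set As \<subseteq> tor G" "S \<subseteq> {0..<length As}"
  shows "subgroup (span_idx G As S) G" "span_idx G As S \<subseteq> tor G"
proof -
  have W: "(!) As ` S \<subseteq> tor G" using assms by (fastforce intro: nth_mem)
  then show "subgroup (span_idx G As S) G"
    using tor_subset_carrier unfolding span_idx_def by (intro generate_is_subgroup) blast
  show "span_idx G As S \<subseteq> tor G"
    unfolding span_idx_def by (rule generate_subgroup_incl[OF W tor_subgroup])
qed

lemma span_idx_subset_kernel_iff:
  assumes As: "set As \<subseteq> tor G" and S: "S \<subseteq> {0..<length As}"
    and K: "group K" and \<psi>: "\<psi> \<in> hom (tor_group G) K"
  shows "span_idx G As S \<subseteq> kernel (tor_group G) K \<psi> \<longleftrightarrow> S \<subseteq> vanishing_indices K As \<psi>"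
proof -
  have W: "(!) As ` S \<subseteq> tor G" using As S by (fastforce intro: nth_mem)
  have "span_idx G As S = generate (tor_group G) ((!) As ` S)"
    unfolding tor_group_def span_idx_def by (rule generate_consistent[OF W tor_subgroup, symmetric])
  then have "span_idx G As S \<subseteq> kernel (tor_group G) K \<psi> \<longleftrightarrow> (!) As ` S \<subseteq> kernel (tor_group G) K \<psi>"
    using group.generate_subset_kernel_iff[OF _ K \<psi>] comm_group_tor_group W
    by (simp add: comm_group_def)
  also have "\<dots> \<longleftrightarrow> S \<subseteq> vanishing_indices K As \<psi>"
    using W S by (auto simp: kernel_def vanishing_indices_def)
  finally show ?thesis .
qed

lemma Homs_Mod_span_idx_bij:
  assumes As: "set As \<subseteq> tor G" and S: "S \<subseteq> {0..<length As}" and K: "group K"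
  shows "bij_betw (\<lambda>\<phi>. compose (tor G) \<phi> (r_coset G (span_idx G As S)))
           (Homs (tor_group G Mod span_idx G As S) K)
           {\<psi> \<in> Homs (tor_group G) K. S \<subseteq> vanishing_indices K As \<psi>}"
proof -
  interpret T: comm_group "tor_group G" by (rule comm_group_tor_group)
  have "subgroup (span_idx G As S) (tor_group G)"
    unfolding tor_group_def using span_idx_subgroup_tor[OF As S]
    by (intro subgroup_incl tor_subgroup)
  then have "span_idx G As S \<lhd> tor_group G" by (rule T.subgroup_imp_normal)
  from T.Homs_FactGroup_bij[OF this K] show ?thesis
    using span_idx_subset_kernel_iff[OF As S K] by (simp add: Homs_def cong: conj_cong)
qed

lemma m_mult_eq_card_Homs:
  assumes As: "set As \<subseteq> tor G" and S: "S \<subseteq> {0..<length As}" and K: "group K"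
  shows "m_mult G As S K = card {\<psi> \<in> Homs (tor_group G) K. S \<subseteq> vanishing_indices K As \<psi>}"
proof -
  show ?thesis
    unfolding m_mult_def tor_group_FactGroup[OF span_idx_subgroup_tor[OF As S]]
    using bij_betw_same_card[OF Homs_Mod_span_idx_bij[OF As S K]] by simp
qed

lemma card_M_contr:
  assumes As: "set As \<subseteq> tor G" and S: "S \<subseteq> {0..<length As}" and K: "group K"
  shows "card (M_contr G As S K) = card {\<psi> \<in> Homs (tor_group G) K. vanishing_indices K As \<psi> = S}"
proof -
  let ?H = "span_idx G As S"
  let ?F = "\<lambda>\<phi>. compose (tor G) \<phi> (r_coset G ?H)"
  have "bij_betw ?F (M_contr G As S K)
          {\<psi> \<in> {\<psi> \<in> Homs (tor_group G) K. S \<subseteq> vanishing_indices K As \<psi>}.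
             \<forall>i \<in> {0..<length As} - S. \<psi> (As ! i) \<noteq> \<one>\<^bsub>K\<^esub>}"
    unfolding M_contr_def
  proof (rule bij_betw_Collect[OF Homs_Mod_span_idx_bij[OF As S K]], rule ball_cong[OF refl])
    fix \<phi> i assume "i \<in> {0..<length As} - S"
    then have "As ! i \<in> tor G" using As by (auto intro: nth_mem)
    then show "?F \<phi> (As ! i) \<noteq> \<one>\<^bsub>K\<^esub> \<longleftrightarrow> \<phi> (?H #> As ! i) \<noteq> \<one>\<^bsub>K\<^esub>"
      by (simp add: compose_eq)
  qed
  moreover have "S \<subseteq> vanishing_indices K As \<psi> \<and> (\<forall>i \<in> {0..<length As} - S. \<psi> (As ! i) \<noteq> \<one>\<^bsub>K\<^esub>)
      \<longleftrightarrow> vanishing_indices K As \<psi> = S" for \<psi>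
    using S by (auto simp: vanishing_indices_def)
  ultimately have "bij_betw ?F (M_contr G As S K)
      {\<psi> \<in> Homs (tor_group G) K. vanishing_indices K As \<psi> = S}"
    by (simp add: conj_assoc)
  then show ?thesis by (rule bij_betw_same_card)
qed

end

theorem mainTheorem8:
  fixes \<Gamma> :: "'a monoid" and G :: "'g monoid" and As :: "'a list"
    and x y :: "'r::comm_ring_1"
  assumes "comm_group \<Gamma>" and "finitely_generated \<Gamma>"
    and "comm_group G" and "torsion_wise_finite G"
    and "set As \<subseteq> tor \<Gamma>"
  shows "tutteG \<Gamma> As G x y =
    (\<Sum>k = 0..length As.
       of_nat (\<Sum>S\<in>{S. S \<subseteq> {0..<length As} \<and> card S = k}. card (M_contr \<Gamma> As S G)) * y ^ k)"
proof -
  interpret \<Gamma>: comm_group \<Gamma> by fact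
  have G: "group G" using assms(3) by (simp add: comm_group_def)
  define I where "I = {0..<length As}"
  define P where "P = Homs (tor_group \<Gamma>) G"
  define Z where "Z = vanishing_indices G As"
  have Z: "Z \<psi> \<subseteq> I" for \<psi> by (auto simp: Z_def I_def vanishing_indices_def)
  have "group (tor_group \<Gamma>)"
    using \<Gamma>.comm_group_tor_group by (simp add: comm_group_def)
  then have "finite P"
    unfolding P_def using \<Gamma>.finite_tor[OF assms(2)]
    by (intro group.finite_Homs[OF _ _ G assms(4)]) simp_all
  have rank: "rank_of \<Gamma> (span_idx \<Gamma> As S) = 0" if "S \<subseteq> I" for S
    using \<Gamma>.rank_of_subset_tor \<Gamma>.span_idx_subgroup_tor(2)[OF assms(5)] that by (simp add: I_def)
  have "tutteG \<Gamma> As G x y = (\<Sum>S\<in>Pow I. of_nat (card {\<psi>\<in>P. S \<subseteq> Z \<psi>}) * (y - 1) ^ card S)"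
    unfolding tutteG_def I_def[symmetric]
    using rank \<Gamma>.m_mult_eq_card_Homs[OF assms(5) _ G] by (intro sum.cong) (simp_all add: I_def P_def Z_def)
  also have "\<dots> = (\<Sum>\<psi>\<in>P. y ^ card (Z \<psi>))"
    using sum_card_supersets[of P I Z "y - 1"] \<open>finite P\<close> Z by (simp add: I_def)
  also have "\<dots> = (\<Sum>k = 0..length As. of_nat (\<Sum>S\<in>{S. S \<subseteq> I \<and> card S = k}. card {\<psi>\<in>P. Z \<psi> = S}) * y ^ k)"
    using sum_card_fibres_by_size[of P I Z "length As" y] \<open>finite P\<close> Z by (simp add: I_def)
  also have "\<dots> = (\<Sum>k = 0..length As.
       of_nat (\<Sum>S\<in>{S. S \<subseteq> I \<and> card S = k}. card (M_contr \<Gamma> As S G)) * y ^ k)"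
    using \<Gamma>.card_M_contr[OF assms(5) _ G] by (simp add: P_def Z_def I_def)
  finally show ?thesis unfolding I_def .
qed

end
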